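(* Let $S=(\Lambda,L)$ on $X$ and $S'=(\Lambda',L')$ on $X'$ be bispectrally dual completely integrable quantum systems, with anti-isomorphism $b:B\to B'$. Let $f\in\mathcal{O}(\Lambda)$ and $g\in\mathcal{O}(\Lambda')$ (the latter viewed, via $\pi'$, as a multiplication operator in $\mathcal{D}(X)$), and let $m=\operatorname{ord}L_f$ and $n=\operatorname{ord}L'_g$. Then there exist elements $K,Q,R\in B$ satisfying $$g^{m+1}\circ L_f=K\circ g,\qquad L_f\circ g^{m+1}=g\circ R,\qquad L_f^{n+1}\circ g=Q\circ L_f.$$
   Context: All varieties are over an algebraically closed field $\mathbb{F}$ of characteristic zero; $\mathcal{D}(X)$ denotes the ring of differential operators on $X$ and $\mathcal{O}(X)$ its coordinate ring. A quantum Hamiltonian system (QHS) on a smooth irreducible affine variety $X$ is a pair $S=(\Lambda,L)$ where $\Lambda$ is an affine variety over $\mathbb{F}$ and $L:\mathcal{O}(\Lambda)\to\mathcal{D}(X)$, $h\mapsto L_h$, is an embedding of rings; it is a completely integrable quantum system if $\dim\Lambda=\dim X$. For QHSs $S=(\Lambda,L)$ on $X$ and $S'=(\Lambda',L')$ on $X'$, suppose $X'$ covers $\Lambda$ and $X$ covers $\Lambda'$, giving natural embeddings $\pi:\mathcal{O}(\Lambda)\to\mathcal{O}(X')$ and $\pi':\mathcal{O}(\Lambda')\to\mathcal{O}(X)$; functions act as multiplication operators, so $\mathcal{O}(X)\subset\mathcal{D}(X)$, and one writes $g$ for $\pi'(g)$ and $f$ for $\pi(f)$. Let $B\subset\mathcal{D}(X)$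 be the subring generated by the images of $L$ and $\pi'$, and $B'\subset\mathcal{D}(X')$ the subring generated by the images of $L'$ and $\pi$. $S$ and $S'$ are bispectrally dual if there is a map $b:B\to B'$ with $b(L_h)=\pi(h)$ for all $h\in\mathcal{O}(\Lambda)$, $b(\pi'(k))=L'_k$ for all $k\in\mathcal{O}(\Lambda')$, $b(P_1P_2)=b(P_2)b(P_1)$ and $b(P_1+P_2)=b(P_1)+b(P_2)$ for all $P_1,P_2\in B$, and $b(P)=0$ iff $P=0$. *)

theory Defs
  imports Main "HOL-Library.Extended_Nat" "HOL-Computational_Algebra.Polynomial"
begin

definition alg_closed :: "'f::field itself \<Rightarrow> bool" where
  "alg_closed _ \<longleftrightarrow> (\<forall>p::'f poly. degree p \<noteq> 0 \<longrightarrow> (\<exists>z. poly p z = 0))"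

section \<open>Commutative F-algebras (coordinate rings), given by the structure map F -> A\<close>

definition falg :: "('f::field \<Rightarrow> 'a::comm_ring_1) \<Rightarrow> bool" where
  "falg \<iota> \<longleftrightarrow> (\<forall>c d. \<iota> (c + d) = \<iota> c + \<iota> d \<and> \<iota> (c * d) = \<iota> c * \<iota> d) \<and> \<iota> 1 = 1"

inductive_set subalg :: "('f::field \<Rightarrow> 'a::comm_ring_1) \<Rightarrow> 'a set \<Rightarrow> 'a set"
  for \<iota> G where
  gen: "g \<in> G \<Longrightarrow> g \<in> subalg \<iota> G"
| scal: "\<iota> c \<in> subalg \<iota> G"
| add: "a \<in> subalg \<iota> G \<Longrightarrow> b \<in> subalg \<iota> G \<Longrightarrow> a + b \<in> subalg \<iota> G"
| mult: "a \<in> subalg \<iota> G \<Longrightarrow> b \<in> subalg \<iota> G \<Longrightarrow> a * b \<in> subalg \<iota> G"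

definition fin_gen :: "('f::field \<Rightarrow> 'a::comm_ring_1) \<Rightarrow> bool" where
  "fin_gen \<iota> \<longleftrightarrow> (\<exists>G. finite G \<and> subalg \<iota> G = UNIV)"

definition reduced :: "'a::comm_ring_1 itself \<Rightarrow> bool" where
  "reduced _ \<longleftrightarrow> (\<forall>(a::'a) n. a ^ n = 0 \<longrightarrow> a = 0)"

text \<open>Coordinate ring of an affine variety over F: a finitely generated reduced
  commutative F-algebra (nonzero, since comm_ring_1 has 0 ~= 1).\<close>
definition affine_coord_ring :: "('f::field \<Rightarrow> 'a::comm_ring_1) \<Rightarrow> bool" where
  "affine_coord_ring \<iota> \<longleftrightarrow> falg \<iota> \<and> fin_gen \<iota> \<and> reduced TYPE('a)"

definition alg_hom :: "('f::field \<Rightarrow> 'a::comm_ring_1) \<Rightarrow> ('f \<Rightarrow> 'b::comm_ring_1) \<Rightarrow> ('a \<Rightarrow> 'b) \<Rightarrow> bool" where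
  "alg_hom \<iota>A \<iota>B \<phi> \<longleftrightarrow> (\<forall>a b. \<phi> (a + b) = \<phi> a + \<phi> b \<and> \<phi> (a * b) = \<phi> a * \<phi> b)
      \<and> \<phi> 1 = 1 \<and> (\<forall>c. \<phi> (\<iota>A c) = \<iota>B c)"

definition is_ideal :: "'a::comm_ring_1 set \<Rightarrow> bool" where
  "is_ideal I \<longleftrightarrow> 0 \<in> I \<and> (\<forall>a\<in>I. \<forall>b\<in>I. a + b \<in> I) \<and> (\<forall>a\<in>I. \<forall>r. r * a \<in> I)"

definition is_prime_ideal :: "'a::comm_ring_1 set \<Rightarrow> bool" where
  "is_prime_ideal I \<longleftrightarrow> is_ideal I \<and> I \<noteq> UNIV \<and> (\<forall>a b. a * b \<in> I \<longrightarrow> a \<in> I \<or> b \<in> I)"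

definition is_maximal_ideal :: "'a::comm_ring_1 set \<Rightarrow> bool" where
  "is_maximal_ideal M \<longleftrightarrow> is_ideal M \<and> M \<noteq> UNIV \<and>
     (\<forall>J. is_ideal J \<and> M \<subseteq> J \<longrightarrow> J = M \<or> J = UNIV)"

definition krull_dim :: "'a::comm_ring_1 itself \<Rightarrow> enat" where
  "krull_dim _ = Sup {enat n | n. \<exists>c :: nat \<Rightarrow> 'a set.
       (\<forall>i\<le>n. is_prime_ideal (c i)) \<and> (\<forall>i<n. c i \<subset> c (Suc i))}"

definition ideal_sq :: "'a::comm_ring_1 set \<Rightarrow> 'a set" where
  "ideal_sq M = {\<Sum>i<(k::nat). a i * b i | k a b. \<forall>i<k. a i \<in> M \<and> b i \<in> M}"

text \<open>dim over F of the cotangent space M/M^2.\<close>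
definition cotangent_dim :: "('f::field \<Rightarrow> 'a::comm_ring_1) \<Rightarrow> 'a set \<Rightarrow> enat" where
  "cotangent_dim \<iota> M = Inf {enat d | d. \<exists>x :: nat \<Rightarrow> 'a. (\<forall>i<d. x i \<in> M) \<and>
       (\<forall>y\<in>M. \<exists>c :: nat \<Rightarrow> 'f. y - (\<Sum>i<d. \<iota> (c i) * x i) \<in> ideal_sq M)}"

text \<open>Coordinate ring of a smooth irreducible affine variety (over an algebraically closed
  field): an affine coordinate ring which is a domain (type class idom) and is regular at every
  maximal ideal, i.e. dim_F (M/M^2) equals the dimension.\<close>
definition smooth_irred_coord_ring :: "('f::field \<Rightarrow> 'a::idom) \<Rightarrow> bool" where
  "smooth_irred_coord_ring \<iota> \<longleftrightarrow> affine_coord_ring \<iota> \<and>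
     (\<forall>M. is_maximal_ideal M \<longrightarrow> cotangent_dim \<iota> M = krull_dim TYPE('a))"

section \<open>Differential operators (Grothendieck's definition)\<close>

definition mul_op :: "'a::comm_ring_1 \<Rightarrow> 'a \<Rightarrow> 'a" where
  "mul_op a = (\<lambda>x. a * x)"

definition F_linear :: "('f::field \<Rightarrow> 'a::comm_ring_1) \<Rightarrow> ('a \<Rightarrow> 'a) \<Rightarrow> bool" where
  "F_linear \<iota> P \<longleftrightarrow> (\<forall>x y. P (x + y) = P x + P y) \<and> (\<forall>c x. P (\<iota> c * x) = \<iota> c * P x)"

fun diffop_le :: "('f::field \<Rightarrow> 'a::comm_ring_1) \<Rightarrow> nat \<Rightarrow> ('a \<Rightarrow> 'a) \<Rightarrow> bool" where
  "diffop_le \<iota> 0 P = (\<exists>a. P = mul_op a)"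
| "diffop_le \<iota> (Suc k) P = (F_linear \<iota> P \<and> (\<forall>a. diffop_le \<iota> k (\<lambda>x. P (a * x) - a * P x)))"

text \<open>The ring D(X) of differential operators (ring structure: pointwise +, composition).\<close>
definition diffops :: "('f::field \<Rightarrow> 'a::comm_ring_1) \<Rightarrow> ('a \<Rightarrow> 'a) set" where
  "diffops \<iota> = {P. \<exists>k. diffop_le \<iota> k P}"

definition ord :: "('f::field \<Rightarrow> 'a::comm_ring_1) \<Rightarrow> ('a \<Rightarrow> 'a) \<Rightarrow> nat" where
  "ord \<iota> P = (LEAST k. diffop_le \<iota> k P)"

inductive_set gen_subring :: "('a \<Rightarrow> 'a::comm_ring_1) set \<Rightarrow> ('a \<Rightarrow> 'a) set" for S where
  gen: "P \<in> S \<Longrightarrow> P \<in> gen_subring S"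
| one: "id \<in> gen_subring S"
| zero: "(\<lambda>_. 0) \<in> gen_subring S"
| add: "P \<in> gen_subring S \<Longrightarrow> Q \<in> gen_subring S \<Longrightarrow> (\<lambda>x. P x + Q x) \<in> gen_subring S"
| neg: "P \<in> gen_subring S \<Longrightarrow> (\<lambda>x. - P x) \<in> gen_subring S"
| comp: "P \<in> gen_subring S \<Longrightarrow> Q \<in> gen_subring S \<Longrightarrow> P \<circ> Q \<in> gen_subring S"

definition QHS :: "('f::field \<Rightarrow> 'l::comm_ring_1) \<Rightarrow> ('f \<Rightarrow> 'x::idom) \<Rightarrow> ('l \<Rightarrow> 'x \<Rightarrow> 'x) \<Rightarrow> bool" where
  "QHS \<iota>\<Lambda> \<iota>X L \<longleftrightarrow> smooth_irred_coord_ring \<iota>X \<and> affine_coord_ring \<iota>\<Lambda> \<and>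
     (\<forall>h. L h \<in> diffops \<iota>X) \<and> inj L \<and>
     (\<forall>h1 h2. L (h1 + h2) = (\<lambda>x. L h1 x + L h2 x) \<and> L (h1 * h2) = L h1 \<circ> L h2) \<and> L 1 = id"

definition completely_integrable ::
  "('f::field \<Rightarrow> 'l::comm_ring_1) \<Rightarrow> ('f \<Rightarrow> 'x::idom) \<Rightarrow> ('l \<Rightarrow> 'x \<Rightarrow> 'x) \<Rightarrow> bool" where
  "completely_integrable \<iota>\<Lambda> \<iota>X L \<longleftrightarrow> QHS \<iota>\<Lambda> \<iota>X L \<and> krull_dim TYPE('l) = krull_dim TYPE('x)"

definition bispectral_dual_via ::
  "('l::comm_ring_1 \<Rightarrow> 'x::idom \<Rightarrow> 'x) \<Rightarrow> ('l' :: comm_ring_1 \<Rightarrow> 'x) \<Rightarrow>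
   ('l' \<Rightarrow> 'x'::idom \<Rightarrow> 'x') \<Rightarrow> ('l \<Rightarrow> 'x') \<Rightarrow> (('x \<Rightarrow> 'x) \<Rightarrow> ('x' \<Rightarrow> 'x')) \<Rightarrow> bool" where
  "bispectral_dual_via L \<pi>' L' \<pi> b \<longleftrightarrow>
     (let B = gen_subring (range L \<union> range (\<lambda>k. mul_op (\<pi>' k))) in
       (\<forall>h. b (L h) = mul_op (\<pi> h)) \<and>
       (\<forall>k. b (mul_op (\<pi>' k)) = L' k) \<and>
       (\<forall>P1\<in>B. \<forall>P2\<in>B. b (P1 \<circ> P2) = b P2 \<circ> b P1) \<and>
       (\<forall>P1\<in>B. \<forall>P2\<in>B. b (\<lambda>x. P1 x + P2 x) = (\<lambda>y. b P1 y + b P2 y)) \<and>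
       (\<forall>P\<in>B. b P = (\<lambda>_. 0) \<longleftrightarrow> P = (\<lambda>_. 0)))"

end

theory Submission
  imports Defs
begin

text \<open>A differential operator P of order at most k has commutator [P, g] of order at most
  k - 1 with every function g. Unwinding this by induction on k moves g across P at the cost of
  raising it to the power k + 1: g^(k+1) P = K g and P g^(k+1) = g R, with K and R in every ring
  of operators containing P and g. In B, for P = L_f, this gives the first two identities. In B',
  for P = L'_g and the function f = b(L_f), it gives L'_g f^(n+1) = f R'; pulling this back along
  the anti-isomorphism b, which swaps left and right factors, gives L_f^(n+1) g = Q L_f.\<close>

definition op_ring_closed :: "('a \<Rightarrow> 'a::ab_group_add) set \<Rightarrow> bool" where
  "op_ring_closed S \<longleftrightarrow>
     (\<forall>P\<in>S. \<forall>Q\<in>S. (\<lambda>x. P x + Q x) \<in> S) \<and> (\<forall>P\<in>S. (\<lambda>x. - P x) \<in> S) \<and>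
     (\<forall>P\<in>S. \<forall>Q\<in>S. P \<circ> Q \<in> S)"

lemma op_ring_closed_add:
  "op_ring_closed S \<Longrightarrow> P \<in> S \<Longrightarrow> Q \<in> S \<Longrightarrow> (\<lambda>x. P x + Q x) \<in> S"
  unfolding op_ring_closed_def by blast

lemma op_ring_closed_neg:
  "op_ring_closed S \<Longrightarrow> P \<in> S \<Longrightarrow> (\<lambda>x. - P x) \<in> S"
  unfolding op_ring_closed_def by blast

lemma op_ring_closed_diff:
  assumes "op_ring_closed S" "P \<in> S" "Q \<in> S"
  shows "(\<lambda>x. P x - Q x) \<in> S"
  using op_ring_closed_add[OF assms(1,2) op_ring_closed_neg[OF assms(1,3)]] by simp

lemma op_ring_closed_comp:
  "op_ring_closed S \<Longrightarrow> P \<in> S \<Longrightarrow> Q \<in> S \<Longrightarrow> P \<circ> Q \<in> S"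
  unfolding op_ring_closed_def by blast

lemma op_ring_closed_funpow:
  assumes "op_ring_closed S" "P \<in> S"
  shows "P ^^ Suc j \<in> S"
proof (induction j)
  case 0
  show ?case using assms(2) by simp
next
  case (Suc j)
  have "P \<circ> P ^^ Suc j \<in> S" using op_ring_closed_comp[OF assms(1,2) Suc] .
  then show ?case by (simp only: funpow.simps(2))
qed

lemma op_ring_closed_gen_subring: "op_ring_closed (gen_subring G)"
  unfolding op_ring_closed_def by (auto intro: gen_subring.intros)

lemma mul_op_funpow: "mul_op (c::'a::comm_ring_1) ^^ j = mul_op (c ^ j)"
  by (induction j) (auto simp: mul_op_def fun_eq_iff)

lemma op_ring_closed_commutator_mul_op:
  assumes "op_ring_closed S" "P \<in> S" "mul_op c \<in> S"
  shows "(\<lambda>x. P (c * x) - c * P x) \<in> S"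
proof -
  have "(\<lambda>x. (P \<circ> mul_op c) x - (mul_op c \<circ> P) x) \<in> S"
    using assms by (intro op_ring_closed_diff op_ring_closed_comp)
  then show ?thesis by (simp add: mul_op_def)
qed

lemma diffop_le_ord: "P \<in> diffops \<iota> \<Longrightarrow> diffop_le \<iota> (ord \<iota> P) P"
  unfolding diffops_def ord_def by (auto intro: LeastI_ex)

lemma mul_op_funpow_comp_diffop:
  fixes P :: "'a::comm_ring_1 \<Rightarrow> 'a"
  assumes "op_ring_closed S" "mul_op c \<in> S"
    and "diffop_le \<iota> k P" "P \<in> S"
  shows "\<exists>K\<in>S. mul_op c ^^ Suc k \<circ> P = K \<circ> mul_op c"
  using assms(3,4)
proof (induction k arbitrary: P)
  case 0
  then obtain a where "P = mul_op a" by auto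
  then have "mul_op c ^^ Suc 0 \<circ> P = P \<circ> mul_op c"
    by (auto simp: mul_op_def fun_eq_iff algebra_simps)
  then show ?case using 0 by blast
next
  case (Suc k)
  define Q where "Q = (\<lambda>x. P (c * x) - c * P x)"
  have "diffop_le \<iota> k Q" "Q \<in> S"
    using Suc.prems assms(1,2) op_ring_closed_commutator_mul_op by (auto simp: Q_def)
  with Suc.IH obtain K' where "K' \<in> S" and K': "mul_op c ^^ Suc k \<circ> Q = K' \<circ> mul_op c"
    by blast
  define K where "K = (\<lambda>x. (mul_op c ^^ Suc k \<circ> P) x - K' x)"
  have "K \<in> S"
    unfolding K_def using assms(1,2) Suc.prems(2) \<open>K' \<in> S\<close>
    by (intro op_ring_closed_diff op_ring_closed_comp op_ring_closed_funpow)
  have K'_mul: "K' (c * y) = c ^ Suc k * Q y" for y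
    using fun_cong[OF K', of y] by (unfold mul_op_funpow) (simp add: mul_op_def)
  have "mul_op c ^^ Suc (Suc k) \<circ> P = K \<circ> mul_op c"
  proof
    fix y
    have "(mul_op c ^^ Suc (Suc k) \<circ> P) y = c ^ Suc k * P (c * y) - c ^ Suc k * Q y"
      by (unfold mul_op_funpow) (simp add: mul_op_def Q_def algebra_simps)
    also have "\<dots> = (K \<circ> mul_op c) y"
      by (unfold K_def mul_op_funpow) (simp add: K'_mul mul_op_def)
    finally show "(mul_op c ^^ Suc (Suc k) \<circ> P) y = (K \<circ> mul_op c) y" .
  qed
  then show ?case using \<open>K \<in> S\<close> by blast
qed

lemma diffop_comp_mul_op_funpow:
  fixes P :: "'a::comm_ring_1 \<Rightarrow> 'a"
  assumes "op_ring_closed S" "mul_op c \<in> S"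
    and "diffop_le \<iota> k P" "P \<in> S"
  shows "\<exists>R\<in>S. P \<circ> mul_op c ^^ Suc k = mul_op c \<circ> R"
  using assms(3,4)
proof (induction k arbitrary: P)
  case 0
  then obtain a where "P = mul_op a" by auto
  then have "P \<circ> mul_op c ^^ Suc 0 = mul_op c \<circ> P"
    by (auto simp: mul_op_def fun_eq_iff algebra_simps)
  then show ?case using 0 by blast
next
  case (Suc k)
  define Q where "Q = (\<lambda>x. P (c * x) - c * P x)"
  have "diffop_le \<iota> k Q" "Q \<in> S"
    using Suc.prems assms(1,2) op_ring_closed_commutator_mul_op by (auto simp: Q_def)
  with Suc.IH obtain R' where "R' \<in> S" and R': "Q \<circ> mul_op c ^^ Suc k = mul_op c \<circ> R'"
    by blast
  define R where "R = (\<lambda>x. R' x + (P \<circ> mul_op c ^^ Suc k) x)"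
  have "R \<in> S"
    unfolding R_def using assms(1,2) Suc.prems(2) \<open>R' \<in> S\<close>
    by (intro op_ring_closed_add op_ring_closed_comp op_ring_closed_funpow)
  have Q_mul: "Q (c ^ Suc k * y) = c * R' y" for y
    using fun_cong[OF R', of y] by (unfold mul_op_funpow) (simp only: mul_op_def comp_apply)
  have "P \<circ> mul_op c ^^ Suc (Suc k) = mul_op c \<circ> R"
  proof
    fix y
    have "(P \<circ> mul_op c ^^ Suc (Suc k)) y = Q (c ^ Suc k * y) + c * P (c ^ Suc k * y)"
      by (unfold mul_op_funpow) (simp add: mul_op_def Q_def algebra_simps)
    also have "\<dots> = (mul_op c \<circ> R) y"
      by (unfold R_def mul_op_funpow) (simp only: Q_mul mul_op_def comp_apply distrib_left)
    finally show "(P \<circ> mul_op c ^^ Suc (Suc k)) y = (mul_op c \<circ> R) y" .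
  qed
  then show ?case using \<open>R \<in> S\<close> by blast
qed

locale op_anti_hom =
  fixes B :: "('a \<Rightarrow> 'a::ab_group_add) set" and b :: "('a \<Rightarrow> 'a) \<Rightarrow> ('c \<Rightarrow> 'c::ab_group_add)"
  assumes closed: "op_ring_closed B"
    and add: "P \<in> B \<Longrightarrow> Q \<in> B \<Longrightarrow> b (\<lambda>x. P x + Q x) = (\<lambda>y. b P y + b Q y)"
    and comp: "P \<in> B \<Longrightarrow> Q \<in> B \<Longrightarrow> b (P \<circ> Q) = b Q \<circ> b P"
    and eq_0_iff: "P \<in> B \<Longrightarrow> b P = (\<lambda>_. 0) \<longleftrightarrow> P = (\<lambda>_. 0)"
begin

lemma neg:
  assumes "P \<in> B"
  shows "b (\<lambda>x. - P x) = (\<lambda>y. - b P y)"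
proof -
  have neg_P: "(\<lambda>x. - P x) \<in> B" using closed assms by (rule op_ring_closed_neg)
  have "(\<lambda>x. P x + - P x) = (\<lambda>_. 0)" by simp
  moreover have "(\<lambda>x. P x + - P x) \<in> B" using closed assms neg_P by (rule op_ring_closed_add)
  ultimately have "(\<lambda>y. b P y + b (\<lambda>x. - P x) y) = (\<lambda>_. 0)"
    using eq_0_iff add[OF assms neg_P] by metis
  then show ?thesis by (simp add: fun_eq_iff add_eq_0_iff)
qed

lemma inj_on: "inj_on b B"
proof
  fix P Q assume "P \<in> B" "Q \<in> B" "b P = b Q"
  have "b (\<lambda>x. P x + - Q x) = (\<lambda>y. b P y + b (\<lambda>x. - Q x) y)"
    using add[OF \<open>P \<in> B\<close> op_ring_closed_neg[OF closed \<open>Q \<in> B\<close>]] .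
  also have "\<dots> = (\<lambda>_. 0)" using neg[OF \<open>Q \<in> B\<close>] \<open>b P = b Q\<close> by simp
  finally have "b (\<lambda>x. P x + - Q x) = (\<lambda>_. 0)" .
  then have "(\<lambda>x. P x + - Q x) = (\<lambda>_. 0)"
    using eq_0_iff \<open>P \<in> B\<close> \<open>Q \<in> B\<close> closed op_ring_closed_add op_ring_closed_neg by blast
  then show "P = Q" by (simp add: fun_eq_iff add_eq_0_iff)
qed

lemma op_ring_closed_image: "op_ring_closed (b ` B)"
  unfolding op_ring_closed_def
proof safe
  fix P Q assume P: "P \<in> B" and Q: "Q \<in> B"
  from add[OF P Q] op_ring_closed_add[OF closed P Q]
  show "(\<lambda>x. b P x + b Q x) \<in> b ` B" by (intro image_eqI) auto
  from neg[OF P] op_ring_closed_neg[OF closed P]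
  show "(\<lambda>x. - b P x) \<in> b ` B" by (intro image_eqI) auto
  from comp[OF Q P] op_ring_closed_comp[OF closed Q P]
  show "b P \<circ> b Q \<in> b ` B" by (intro image_eqI) auto
qed

lemma funpow: "P \<in> B \<Longrightarrow> b (P ^^ Suc j) = b P ^^ Suc j"
proof (induction j)
  case (Suc j)
  have "b (P ^^ Suc (Suc j)) = b (P ^^ Suc j \<circ> P)" by (simp only: funpow_Suc_right)
  also have "\<dots> = b P \<circ> b (P ^^ Suc j)"
    using Suc.prems comp closed op_ring_closed_funpow by blast
  also have "\<dots> = b P ^^ Suc (Suc j)" unfolding Suc.IH[OF Suc.prems] by simp
  finally show ?case .
qed simp

lemma funpow_comp_factor_from_image:
  assumes P: "P \<in> B" and C: "C \<in> B"
    and "\<exists>R'\<in>b ` B. b P \<circ> b C ^^ Suc n = b C \<circ> R'"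
  shows "\<exists>Q\<in>B. C ^^ Suc n \<circ> P = Q \<circ> C"
proof -
  from assms(3) obtain R where R: "R \<in> B" and factor: "b P \<circ> b C ^^ Suc n = b C \<circ> b R"
    by blast
  have C_pow: "C ^^ Suc n \<in> B" using closed C by (rule op_ring_closed_funpow)
  have "b (C ^^ Suc n \<circ> P) = b P \<circ> b C ^^ Suc n"
    using comp[OF C_pow P] funpow[OF C] by simp
  also have "\<dots> = b (R \<circ> C)" using factor comp[OF R C] by simp
  finally have "C ^^ Suc n \<circ> P = R \<circ> C"
    using inj_onD[OF inj_on] op_ring_closed_comp[OF closed] C_pow P R C by blast
  then show ?thesis using R by blast
qed

end

theorem mainTheorem2:
  fixes \<iota>X :: "'f::field_char_0 \<Rightarrow> 'x::idom"
    and \<iota>X' :: "'f \<Rightarrow> 'x2::idom"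
    and \<iota>\<Lambda> :: "'f \<Rightarrow> 'l::comm_ring_1"
    and \<iota>\<Lambda>' :: "'f \<Rightarrow> 'l2::comm_ring_1"
    and L :: "'l \<Rightarrow> 'x \<Rightarrow> 'x"
    and L' :: "'l2 \<Rightarrow> 'x2 \<Rightarrow> 'x2"
    and \<pi> :: "'l \<Rightarrow> 'x2"
    and \<pi>' :: "'l2 \<Rightarrow> 'x"
    and b :: "('x \<Rightarrow> 'x) \<Rightarrow> ('x2 \<Rightarrow> 'x2)"
    and f :: 'l and g :: 'l2
  assumes "alg_closed TYPE('f)"
    and "completely_integrable \<iota>\<Lambda> \<iota>X L"
    and "completely_integrable \<iota>\<Lambda>' \<iota>X' L'"
    and "alg_hom \<iota>\<Lambda> \<iota>X' \<pi>" and "inj \<pi>"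
    and "alg_hom \<iota>\<Lambda>' \<iota>X \<pi>'" and "inj \<pi>'"
    and "bispectral_dual_via L \<pi>' L' \<pi> b"
  shows "\<exists>K\<in>gen_subring (range L \<union> range (\<lambda>k. mul_op (\<pi>' k))).
         \<exists>Q\<in>gen_subring (range L \<union> range (\<lambda>k. mul_op (\<pi>' k))).
         \<exists>R\<in>gen_subring (range L \<union> range (\<lambda>k. mul_op (\<pi>' k))).
           (mul_op (\<pi>' g) ^^ (ord \<iota>X (L f) + 1)) \<circ> L f = K \<circ> mul_op (\<pi>' g) \<and>
           L f \<circ> (mul_op (\<pi>' g) ^^ (ord \<iota>X (L f) + 1)) = mul_op (\<pi>' g) \<circ> R \<and>
           (L f ^^ (ord \<iota>X' (L' g) + 1)) \<circ> mul_op (\<pi>' g) = Q \<circ> L f"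
proof -
  define B where "B = gen_subring (range L \<union> range (\<lambda>k. mul_op (\<pi>' k)))"
  have B: "op_ring_closed B" "L f \<in> B" "mul_op (\<pi>' g) \<in> B"
    unfolding B_def by (auto intro: op_ring_closed_gen_subring gen_subring.gen)
  have dual: "op_anti_hom B b" "b (L f) = mul_op (\<pi> f)" "b (mul_op (\<pi>' g)) = L' g"
    using assms(8) B(1) unfolding bispectral_dual_via_def op_anti_hom_def B_def Let_def
    by auto
  interpret op_anti_hom B b by (fact dual(1))
  have "QHS \<iota>\<Lambda> \<iota>X L" "QHS \<iota>\<Lambda>' \<iota>X' L'"
    using assms(2,3) unfolding completely_integrable_def by auto
  then have ord_L: "diffop_le \<iota>X (ord \<iota>X (L f)) (L f)"
    and ord_L': "diffop_le \<iota>X' (ord \<iota>X' (L' g)) (L' g)"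
    unfolding QHS_def by (auto intro: diffop_le_ord)
  have "L' g \<in> b ` B" "mul_op (\<pi> f) \<in> b ` B"
    using image_eqI[where f = b, OF dual(3)[symmetric] B(3)]
      image_eqI[where f = b, OF dual(2)[symmetric] B(2)] .
  then have "\<exists>R'\<in>b ` B. b (mul_op (\<pi>' g)) \<circ> b (L f) ^^ Suc (ord \<iota>X' (L' g)) = b (L f) \<circ> R'"
    using diffop_comp_mul_op_funpow[OF op_ring_closed_image _ ord_L'] dual(2,3) by simp
  then have "\<exists>Q\<in>B. L f ^^ Suc (ord \<iota>X' (L' g)) \<circ> mul_op (\<pi>' g) = Q \<circ> L f"
    using funpow_comp_factor_from_image B(2,3) by blast
  with mul_op_funpow_comp_diffop[OF B(1,3) ord_L B(2)]
    diffop_comp_mul_op_funpow[OF B(1,3) ord_L B(2)]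
  show ?thesis unfolding B_def by auto
qed

end
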